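(* Let $p_1,\ldots,p_m\in[0,1]$, $\alpha\in[0,1]$, $h=h_\alpha$ as in the context, and let $S\subseteq\{1,\ldots,m\}$ be nonempty. Define \[ z_\alpha=\begin{cases}0,&\text{if } h=m,\\ \min\{m-h\le i\le m: h\,p_{(i)}\le (i-m+h+1)\alpha\},&\text{otherwise.}\end{cases} \] Then the maximum of $1-u+|\{i\in S: hp_i\le u\alpha\}|$ over $1\le u\le |S|$ is attained for some $1\le u\le z_\alpha-m+h+1$.
   Context: Setting: $m$ hypotheses with $p$-values $p_1,\ldots,p_m\in[0,1]$; $p_{(1)}\le\cdots\le p_{(m)}$ are the ordered $p$-values (with the convention $p_{(0)}$ not used). For $I\subseteq\{1,\ldots,m\}$, $p_{(i:I)}$ denotes the $i$-th smallest of $\{p_j:j\in I\}$. The Simes local test rejects $I$ ($I\in\mathcal{U}_\alpha$) iff there is $1\le i\le |I|$ with $|I|\,p_{(i:I)}\le i\alpha$. Let $r_1,\ldots,r_m$ be a permutation with $p_{r_i}=p_{(i)}$, $K_i=\{r_{m-i+1},\ldots,r_m\}$, and $h_\alpha=\max\{0\le i\le m: K_i\notin\mathcal{U}_\alpha\}$. *)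

theory Defs
  imports Complex_Main
begin

definition pord :: "(nat \<Rightarrow> real) \<Rightarrow> nat set \<Rightarrow> nat \<Rightarrow> real" where
  "pord p I i = sort (map p (sorted_list_of_set I)) ! (i - 1)"

definition simes_rej :: "real \<Rightarrow> (nat \<Rightarrow> real) \<Rightarrow> nat set \<Rightarrow> bool" where
  "simes_rej \<alpha> p I = (\<exists>i\<in>{1..card I}. real (card I) * pord p I i \<le> real i * \<alpha>)"

definition Kset :: "(nat \<Rightarrow> nat) \<Rightarrow> nat \<Rightarrow> nat \<Rightarrow> nat set" where
  "Kset r m i = r ` {m - i + 1..m}"

definition h_alpha :: "real \<Rightarrow> (nat \<Rightarrow> real) \<Rightarrow> (nat \<Rightarrow> nat) \<Rightarrow> nat \<Rightarrow> nat" where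
  "h_alpha \<alpha> p r m = Max {i\<in>{0..m}. \<not> simes_rej \<alpha> p (Kset r m i)}"

definition z_alpha :: "real \<Rightarrow> (nat \<Rightarrow> real) \<Rightarrow> nat \<Rightarrow> nat \<Rightarrow> nat" where
  "z_alpha \<alpha> p m h = (if h = m then 0 else
     Min {i. m - h \<le> i \<and> i \<le> m \<and>
             real h * pord p {1..m} i \<le> real (i + h + 1 - m) * \<alpha>})"

end

theory Submission
  imports Defs "HOL-Library.Multiset"
begin

text \<open>
  Write \<open>q\<^sub>i\<close> for the ordered p-values and \<open>C(v) = |{i \<le> m. h p\<^sub>i \<le> v \<alpha>}|\<close>.
  Since \<open>K\<^sub>h\<close> is not rejected, \<open>v \<alpha> < h q\<^bsub>m-h+v\<^esub>\<close> for \<open>1 \<le> v \<le> h\<close>, hence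
  \<open>C(v) \<le> m - h + v - 1\<close> for every \<open>v \<ge> 1\<close>. Since \<open>K\<^bsub>h+1\<^esub>\<close> is rejected, the minimum
  \<open>z\<close> exists (when \<open>h < m\<close>), and for \<open>D = z - m + h + 1\<close> all of \<open>q\<^sub>1, \<dots>, q\<^sub>z\<close>
  satisfy \<open>h q\<^sub>i \<le> D \<alpha>\<close>, so \<open>C(D) \<ge> z = m - h + D - 1\<close>. Thus \<open>C\<close> grows by at most \<open>v - D\<close> between
  \<open>D\<close> and \<open>v \<ge> D\<close>; the count restricted to \<open>S\<close> grows even less, so the objective
  \<open>1 - u + |{i \<in> S. h p\<^sub>i \<le> u \<alpha>}|\<close> does not increase beyond \<open>D\<close>.
\<close>

lemma argmax_le_if_nonincreasing_from:
  fixes f :: "nat \<Rightarrow> 'a::linorder"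
  assumes "1 \<le> n" "1 \<le> D" and nonincr: "\<And>v. D \<le> v \<Longrightarrow> f v \<le> f D"
  shows "\<exists>u\<in>{1..n}. u \<le> D \<and> (\<forall>v\<in>{1..n}. f v \<le> f u)"
proof -
  have "Max (f ` {1..n}) \<in> f ` {1..n}" using \<open>1 \<le> n\<close> by (intro Max_in) auto
  then obtain u where u: "u \<in> {1..n}" "f u = Max (f ` {1..n})" by (metis imageE)
  then have max: "f v \<le> f u" if "v \<in> {1..n}" for v using that by simp
  show ?thesis
  proof (cases "u \<le> D")
    case True
    with u max show ?thesis by blast
  next
    case False
    then have "f u \<le> f D" "D \<in> {1..n}" using nonincr u(1) \<open>1 \<le> D\<close> by auto
    then show ?thesis using max order.trans by blast
  qed
qed

lemma card_Collect_increment_le: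
  assumes "finite A" "S \<subseteq> A" and PQ: "\<And>x. P x \<Longrightarrow> Q x"
  shows "card {x\<in>S. Q x} + card {x\<in>A. P x} \<le> card {x\<in>S. P x} + card {x\<in>A. Q x}"
proof -
  have "finite S" using assms finite_subset by blast
  have split: "card {x\<in>B. Q x} = card {x\<in>B. P x} + card {x\<in>B. Q x \<and> \<not> P x}"
    if "finite B" for B
  proof -
    have "{x\<in>B. Q x} = {x\<in>B. P x} \<union> {x\<in>B. Q x \<and> \<not> P x}" using PQ by blast
    with that show ?thesis by (simp add: card_Un_disjoint disjoint_iff)
  qed
  have "card {x\<in>S. Q x \<and> \<not> P x} \<le> card {x\<in>A. Q x \<and> \<not> P x}"
    using assms by (intro card_mono) auto
  with split[OF \<open>finite S\<close>] split[OF \<open>finite A\<close>] show ?thesis by linarith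
qed

lemma card_Collect_bij_betw:
  assumes "bij_betw r A B"
  shows "card {x\<in>B. P x} = card {x\<in>A. P (r x)}"
proof -
  have "r ` {x\<in>A. P (r x)} = {x\<in>B. P x}"
    using bij_betw_imp_surj_on[OF assms] by blast
  then have "bij_betw r {x\<in>A. P (r x)} {x\<in>B. P x}"
    by (rule bij_betw_subset[OF assms, rotated]) blast
  then show ?thesis by (simp add: bij_betw_same_card)
qed

lemma pord_atLeastAtMost: "pord p {1..m} i = sort (map p [1..<Suc m]) ! (i - 1)"
  unfolding pord_def by (simp add: atLeastLessThanSuc_atLeastAtMost[symmetric])

lemma pord_mono:
  assumes "1 \<le> i" "i \<le> j" "j \<le> m"
  shows "pord p {1..m} i \<le> pord p {1..m} j"
  unfolding pord_atLeastAtMost using assms by (intro sorted_nth_mono[OF sorted_sort]) auto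

lemma h_alpha_mem: "h_alpha \<alpha> p r m \<in> {i\<in>{0..m}. \<not> simes_rej \<alpha> p (Kset r m i)}"
proof -
  have "0 \<in> {i\<in>{0..m}. \<not> simes_rej \<alpha> p (Kset r m i)}"
    by (simp add: simes_rej_def Kset_def)
  then show ?thesis unfolding h_alpha_def by (intro Max_in) auto
qed

lemma h_alpha_maximal:
  assumes "i \<le> m" "\<not> simes_rej \<alpha> p (Kset r m i)"
  shows "i \<le> h_alpha \<alpha> p r m"
  unfolding h_alpha_def using assms by (intro Max_ge) auto

locale sorted_pvalues =
  fixes p :: "nat \<Rightarrow> real" and m :: nat and r :: "nat \<Rightarrow> nat"
  assumes r_perm: "bij_betw r {1..m} {1..m}"
    and r_sort: "\<forall>i\<in>{1..m}. p (r i) = pord p {1..m} i"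
begin

lemma card_threshold_pord:
  "card {i\<in>{1..m}. P (p i)} = card {i\<in>{1..m}. P (pord p {1..m} i)}"
  using card_Collect_bij_betw[OF r_perm, of "P \<circ> p"] r_sort by (auto intro: arg_cong[where f = card])

lemma pord_nonneg:
  assumes "\<forall>i\<in>{1..m}. 0 \<le> p i" "i \<in> {1..m}"
  shows "0 \<le> pord p {1..m} i"
  using assms r_sort bij_betw_apply[OF r_perm] by metis

lemma card_Kset: "k \<le> m \<Longrightarrow> card (Kset r m k) = k"
  unfolding Kset_def
  by (subst card_image) (auto intro: inj_on_subset[OF bij_betw_imp_inj_on[OF r_perm]])

text \<open>\<open>K\<^sub>k\<close> consists of the \<open>k\<close> largest p-values, so its \<open>j\<close>-th smallest is \<open>q\<^bsub>m-k+j\<^esub>\<close>.\<close>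
lemma pord_Kset:
  assumes "k \<le> m" "1 \<le> j" "j \<le> k"
  shows "pord p (Kset r m k) j = pord p {1..m} (m - k + j)"
proof -
  let ?A = "{m - k + 1..m}"
  let ?q = "pord p {1..m}"
  have sub: "?A \<subseteq> {1..m}" by auto
  have inj: "inj_on r ?A" using r_perm sub bij_betw_imp_inj_on inj_on_subset by blast
  have "mset (map p (sorted_list_of_set (Kset r m k))) = image_mset p (mset_set (r ` ?A))"
    by (simp add: Kset_def del: mset_sorted_list_of_multiset flip: sorted_list_of_mset_set)
      (metis mset_sorted_list_of_multiset)
  also have "\<dots> = image_mset ?q (mset_set ?A)"
    unfolding image_mset_mset_set[OF inj, symmetric] multiset.map_comp
    by (rule image_mset_cong) (use r_sort sub in auto)
  also have "\<dots> = mset (map ?q [m - k + 1..<Suc m])"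
    by (simp only: mset_map mset_upt atLeastLessThanSuc_atLeastAtMost)
  finally have mset_eq:
    "mset (map p (sorted_list_of_set (Kset r m k))) = mset (map ?q [m - k + 1..<Suc m])" .
  have "sorted (map ?q [m - k + 1..<Suc m])"
    unfolding sorted_iff_nth_mono
  proof (intro allI impI)
    fix i j assume "i \<le> j" "j < length (map ?q [m - k + 1..<Suc m])"
    then show "map ?q [m - k + 1..<Suc m] ! i \<le> map ?q [m - k + 1..<Suc m] ! j"
      using pord_mono[of "Suc (m - k + i)" "Suc (m - k + j)" m p]
      by (simp del: upt_Suc add: nth_map_upt)
  qed
  then have "sort (map p (sorted_list_of_set (Kset r m k))) = map ?q [m - k + 1..<Suc m]"
    by (rule properties_for_sort[OF mset_eq[symmetric]])
  then show ?thesis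
    using assms by (simp add: pord_def del: upt_Suc)
qed

lemma card_threshold_le_if_not_rej:
  assumes "k \<le> m" "\<not> simes_rej \<alpha> p (Kset r m k)" "1 \<le> v"
  shows "card {i\<in>{1..m}. real k * p i \<le> real v * \<alpha>} \<le> m - k + v - 1"
proof (cases "k < v")
  case True
  have "card {i\<in>{1..m}. real k * p i \<le> real v * \<alpha>} \<le> card {1..m}" by (intro card_mono) auto
  with True show ?thesis by simp
next
  case False
  let ?q = "pord p {1..m}" and ?t = "m - k + v"
  have "\<not> real k * pord p (Kset r m k) v \<le> real v * \<alpha>"
    using assms False unfolding simes_rej_def card_Kset[OF \<open>k \<le> m\<close>] by auto
  then have below: "real v * \<alpha> < real k * ?q ?t"
    using assms False by (simp add: pord_Kset)
  have "{i\<in>{1..m}. real k * ?q i \<le> real v * \<alpha>} \<subseteq> {1..?t - 1}"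
  proof (rule subsetI, rule ccontr)
    fix i assume i: "i \<in> {i\<in>{1..m}. real k * ?q i \<le> real v * \<alpha>}" "i \<notin> {1..?t - 1}"
    then have "real k * ?q ?t \<le> real k * ?q i"
      using assms by (intro mult_left_mono pord_mono) auto
    with i below show False by simp
  qed
  then have "card {i\<in>{1..m}. real k * ?q i \<le> real v * \<alpha>} \<le> ?t - 1"
    by (metis card_atLeastAtMost card_mono diff_Suc_1 finite_atLeastAtMost)
  then show ?thesis unfolding card_threshold_pord[of "\<lambda>x. real k * x \<le> real v * \<alpha>"] .
qed

lemma z_alpha_mem:
  assumes nonneg: "\<forall>i\<in>{1..m}. 0 \<le> p i"
    and h: "h = h_alpha \<alpha> p r m" and "h < m"
  shows "z_alpha \<alpha> p m h \<in>
    {i. m - h \<le> i \<and> i \<le> m \<and> real h * pord p {1..m} i \<le> real (i + h + 1 - m) * \<alpha>}"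
    (is "_ \<in> ?Z")
proof -
  let ?q = "pord p {1..m}"
  have "simes_rej \<alpha> p (Kset r m (h + 1))"
    using h \<open>h < m\<close> h_alpha_maximal[of "h + 1" m \<alpha> p r] by fastforce
  then obtain j where j: "1 \<le> j" "j \<le> h + 1"
    and "real (h + 1) * ?q (m - (h + 1) + j) \<le> real j * \<alpha>"
    using \<open>h < m\<close> unfolding simes_rej_def by (auto simp: card_Kset pord_Kset)
  moreover have "0 \<le> ?q (m - (h + 1) + j)"
    by (rule pord_nonneg[OF nonneg]) (use j \<open>h < m\<close> in auto)
  then have "real h * ?q (m - (h + 1) + j) \<le> real (h + 1) * ?q (m - (h + 1) + j)"
    by (simp add: algebra_simps)
  ultimately have "m - (h + 1) + j \<in> ?Z" using \<open>h < m\<close> by auto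
  then have "Min ?Z \<in> ?Z" by (intro Min_in) auto
  moreover have "z_alpha \<alpha> p m h = Min ?Z" using \<open>h < m\<close> by (simp add: z_alpha_def)
  ultimately show ?thesis by simp
qed

lemma z_alpha_threshold:
  assumes nonneg: "\<forall>i\<in>{1..m}. 0 \<le> p i"
    and h: "h = h_alpha \<alpha> p r m" and z: "z = z_alpha \<alpha> p m h"
  shows "m \<le> z + h" "z \<le> card {i\<in>{1..m}. real h * p i \<le> real (z + h + 1 - m) * \<alpha>}"
proof -
  let ?q = "pord p {1..m}"
  have threshold: "m \<le> z + h \<and> z \<le> card {i\<in>{1..m}. real h * ?q i \<le> real (z + h + 1 - m) * \<alpha>}"
  proof (cases "h < m")
    case False
    then have "h = m" using h h_alpha_mem[of \<alpha> p r m] by simp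
    then show ?thesis using z by (simp add: z_alpha_def)
  next
    case True
    then have zZ: "m - h \<le> z" "z \<le> m" "real h * ?q z \<le> real (z + h + 1 - m) * \<alpha>"
      using z_alpha_mem[OF nonneg h] z by auto
    have "real h * ?q i \<le> real (z + h + 1 - m) * \<alpha>" if "i \<in> {1..z}" for i
    proof -
      have "real h * ?q i \<le> real h * ?q z"
        using that zZ by (intro mult_left_mono pord_mono) auto
      with zZ(3) show ?thesis by linarith
    qed
    then have "{1..z} \<subseteq> {i\<in>{1..m}. real h * ?q i \<le> real (z + h + 1 - m) * \<alpha>}"
      using zZ by auto
    then have "card {1..z} \<le> card {i\<in>{1..m}. real h * ?q i \<le> real (z + h + 1 - m) * \<alpha>}"
      by (intro card_mono) auto
    with zZ True show ?thesis by simp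
  qed
  then show "m \<le> z + h" by simp
  show "z \<le> card {i\<in>{1..m}. real h * p i \<le> real (z + h + 1 - m) * \<alpha>}"
    unfolding card_threshold_pord[of "\<lambda>x. real h * x \<le> real (z + h + 1 - m) * \<alpha>"]
    using threshold by (rule conjunct2)
qed

lemma card_threshold_increment_le:
  assumes nonneg: "\<forall>i\<in>{1..m}. 0 \<le> p i" and "0 \<le> \<alpha>" "S \<subseteq> {1..m}"
    and h: "h = h_alpha \<alpha> p r m" and z: "z = z_alpha \<alpha> p m h"
    and v: "z + h + 1 - m \<le> v"
  shows "card {i\<in>S. real h * p i \<le> real v * \<alpha>} + (z + h + 1 - m)
    \<le> card {i\<in>S. real h * p i \<le> real (z + h + 1 - m) * \<alpha>} + v"
proof -
  define C where "C X u = card {i\<in>X. real h * p i \<le> real u * \<alpha>}" for X u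
  define D where "D = z + h + 1 - m"
  have "real D * \<alpha> \<le> real v * \<alpha>" using assms by (simp add: D_def mult_right_mono)
  then have "C S v + C {1..m} D \<le> C S D + C {1..m} v"
    unfolding C_def using \<open>S \<subseteq> {1..m}\<close> by (intro card_Collect_increment_le) auto
  moreover have "m \<le> z + h" "z \<le> C {1..m} D"
    using z_alpha_threshold[OF nonneg h z] by (simp_all add: C_def D_def)
  moreover have h_le: "h \<le> m" and "\<not> simes_rej \<alpha> p (Kset r m h)" using h h_alpha_mem by auto
  then have "C {1..m} v \<le> m - h + v - 1"
    using card_threshold_le_if_not_rej \<open>m \<le> z + h\<close> v by (simp add: C_def)
  ultimately show ?thesis using v h_le unfolding C_def D_def by presburger
qed

end

theorem lemma3:
  fixes p :: "nat \<Rightarrow> real" and \<alpha> :: real and m :: nat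
    and r :: "nat \<Rightarrow> nat" and S :: "nat set"
  assumes p_range: "\<forall>i\<in>{1..m}. 0 \<le> p i \<and> p i \<le> 1"
    and alpha: "0 \<le> \<alpha>" "\<alpha> \<le> 1"
    and r_perm: "bij_betw r {1..m} {1..m}"
    and r_sort: "\<forall>i\<in>{1..m}. p (r i) = pord p {1..m} i"
    and S: "S \<subseteq> {1..m}" "S \<noteq> {}"
  shows "let h = h_alpha \<alpha> p r m; z = z_alpha \<alpha> p m h;
             f = (\<lambda>u::nat. 1 - int u + int (card {i\<in>S. real h * p i \<le> real u * \<alpha>}))
         in \<exists>u\<in>{1..card S}. int u \<le> int z - int m + int h + 1 \<and>
               (\<forall>v\<in>{1..card S}. f v \<le> f u)"
proof -
  interpret sorted_pvalues p m r using r_perm r_sort by unfold_locales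
  define h where "h = h_alpha \<alpha> p r m"
  define z where "z = z_alpha \<alpha> p m h"
  define D where "D = z + h + 1 - m"
  define f where "f u = 1 - int u + int (card {i\<in>S. real h * p i \<le> real u * \<alpha>})" for u
  have "m \<le> z + h" using z_alpha_threshold[OF _ h_def z_def] p_range by simp
  have "f v \<le> f D" if "D \<le> v" for v
    using card_threshold_increment_le[OF _ alpha(1) S(1) h_def z_def, of v] p_range that
    unfolding f_def D_def by simp
  moreover have "1 \<le> D" using \<open>m \<le> z + h\<close> by (simp add: D_def)
  moreover have "1 \<le> card S" using S finite_subset[OF S(1)] by (simp add: Suc_le_eq card_gt_0_iff)
  ultimately obtain u where u: "u \<in> {1..card S}" "u \<le> D" "\<forall>v\<in>{1..card S}. f v \<le> f u"
    using argmax_le_if_nonincreasing_from[of "card S" D f] by blast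
  moreover have "int u \<le> int z - int m + int h + 1"
    using u(2) \<open>m \<le> z + h\<close> unfolding D_def by linarith
  ultimately show ?thesis
    unfolding Let_def h_def[symmetric] z_def[symmetric] f_def[symmetric] by blast
qed

end
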